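(* Let $(S,\mathcal{S})$ be a measurable space with $\Delta\in\mathcal{S}\otimes\mathcal{S}$ and let $\pi:\Omega \to C(S)$ be a constructive cr-set with independent increments. Then there exist finite measures $\mu_{n}:\mathcal{S}\to [0,\infty)$, $n\in\mathbb{N}$, such that $-\log(1-T_{\pi}(A))=\sum_{n\in\mathbb{N}}\mu_{n}(A)$ for all $A\in\mathcal{S}$ (with $-\log 0=\infty$).
   Context: $\Delta=\{(x,x)\mid x\in S\}$. $(\Omega,\mathcal{F},P)$ is a probability space; $C(S)$ is the set of countable subsets of $S$; $N_A(M)=|A\cap M|$; $\mathcal{C}(\mathcal{S})=\sigma(N_A\mid A\in\mathcal{S})$; a cr-set is an $\mathcal{F}$-$\mathcal{C}(\mathcal{S})$ measurable map $\Omega\to C(S)$, finite if its values are finite sets. A map $\tau:\Omega\to C(S)$ is constructive if $\tau(\omega)=\bigcup_k\pi_k(\omega)$ for all $\omega$ for some finite cr-sets $\pi_k$, $k\in\mathbb{N}$. A cr-set $\pi$ has independent increments if $N_{A_1}(\pi),\dots,N_{A_n}(\pi)$ are independent for all pairwise disjoint $A_1,\dots,A_n\in\mathcal{S}$. The hitting function is $T_\pi(A)=P(\pi\cap A\neq\emptyset)$, $A\in\mathcal{S}$. *)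

theory Defs
  imports "HOL-Probability.Probability"
begin

definition countable_subsets :: "'s measure \<Rightarrow> 's set set" where
  "countable_subsets M = {X. X \<subseteq> space M \<and> countable X}"

definition Ncount :: "'s set \<Rightarrow> 's set \<Rightarrow> enat" where
  "Ncount A X = (if finite (A \<inter> X) then enat (card (A \<inter> X)) else \<infinity>)"

text \<open>The measurable space (C(S), C(\<S>)): sigma-algebra generated by the maps N_A, A \<in> \<S>,
  where the target (extended naturals) carries the discrete sigma-algebra.\<close>
definition cr_space :: "'s measure \<Rightarrow> 's set measure" where
  "cr_space M = sigma (countable_subsets M)
     {{X \<in> countable_subsets M. Ncount A X \<in> B} | A B. A \<in> sets M \<and> B \<subseteq> (UNIV :: enat set)}"

definition cr_set :: "'w measure \<Rightarrow> 's measure \<Rightarrow> ('w \<Rightarrow> 's set) \<Rightarrow> bool" where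
  "cr_set P M \<pi> \<longleftrightarrow> \<pi> \<in> measurable P (cr_space M)"

definition finite_cr_set :: "'w measure \<Rightarrow> 's measure \<Rightarrow> ('w \<Rightarrow> 's set) \<Rightarrow> bool" where
  "finite_cr_set P M \<pi> \<longleftrightarrow> cr_set P M \<pi> \<and> (\<forall>\<omega>\<in>space P. finite (\<pi> \<omega>))"

definition constructive :: "'w measure \<Rightarrow> 's measure \<Rightarrow> ('w \<Rightarrow> 's set) \<Rightarrow> bool" where
  "constructive P M \<tau> \<longleftrightarrow>
     (\<exists>\<pi>s :: nat \<Rightarrow> 'w \<Rightarrow> 's set. (\<forall>k. finite_cr_set P M (\<pi>s k)) \<and>
        (\<forall>\<omega>\<in>space P. \<tau> \<omega> = (\<Union>k. \<pi>s k \<omega>)))"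

definition indep_increments :: "'w measure \<Rightarrow> 's measure \<Rightarrow> ('w \<Rightarrow> 's set) \<Rightarrow> bool" where
  "indep_increments P M \<pi> \<longleftrightarrow>
     (\<forall>(n::nat) (A :: nat \<Rightarrow> 's set). (\<forall>i<n. A i \<in> sets M) \<longrightarrow> disjoint_family_on A {..<n} \<longrightarrow>
        prob_space.indep_vars P (\<lambda>_. count_space (UNIV :: enat set))
          (\<lambda>i \<omega>. Ncount (A i) (\<pi> \<omega>)) {..<n})"

definition hitting :: "'w measure \<Rightarrow> ('w \<Rightarrow> 's set) \<Rightarrow> 's set \<Rightarrow> real" where
  "hitting P \<pi> A = measure P {\<omega> \<in> space P. \<pi> \<omega> \<inter> A \<noteq> {}}"

definition neglog1m :: "real \<Rightarrow> ennreal" where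
  "neglog1m t = (if 1 - t = 0 then \<infinity> else ennreal (- ln (1 - t)))"

end

theory Submission
  imports Defs
begin

(*
  Let q(A) = P(\<pi> \<inter> A = {}) be the void probability of \<pi>, so that
  -log(1 - T(A)) = -log q(A).  The proof has three parts.

  1. Independent increments make q multiplicative on disjoint sets, and q is
     continuous along increasing sequences; hence A \<mapsto> -log q(A) is a
     (possibly infinite) measure \<nu> on M, the hitting measure.
  2. If \<pi> = \<Union>k \<pi>_k with finite cr-sets \<pi>_k, the weighted expected counts
     \<lambda>(A) = E[\<Sum>k 2^-k N_A(\<pi>_k) / (1 + N_S(\<pi>_k))] define a finite measure
     with \<lambda>(A) = 0 only if \<pi> a.s. misses A; so \<nu> is absolutely continuous
     with respect to \<lambda>.
  3. Every measure absolutely continuous with respect to a finite measure is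
     a countable sum of finite measures: by Radon-Nikodym \<nu> = f \<lambda>, and
     f = \<Sum>n min 1 (f - n) splits \<nu> into densities bounded by 1.
*)

lemma space_cr_space: "space (cr_space M) = countable_subsets M"
  unfolding cr_space_def by (rule space_measure_of) auto

lemma measurable_Ncount:
  assumes "cr_set P M \<pi>" "A \<in> sets M"
  shows "(\<lambda>\<omega>. Ncount A (\<pi> \<omega>)) \<in> measurable P (count_space UNIV)"
proof (rule measurableI)
  fix B :: "enat set"
  have \<pi>: "\<pi> \<in> measurable P (cr_space M)" using assms(1) by (simp add: cr_set_def)
  let ?G = "{X \<in> countable_subsets M. Ncount A X \<in> B}"
  have G: "?G \<in> sets (cr_space M)" unfolding cr_space_def
    by (rule in_measure_of) (use assms(2) in auto)
  have "(\<lambda>\<omega>. Ncount A (\<pi> \<omega>)) -` B \<inter> space P = \<pi> -` ?G \<inter> space P"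
    using measurable_space[OF \<pi>] by (auto simp: space_cr_space)
  then show "(\<lambda>\<omega>. Ncount A (\<pi> \<omega>)) -` B \<inter> space P \<in> sets P"
    using measurable_sets[OF \<pi> G] by simp
qed simp

lemma Ncount_eq_0_iff: "Ncount A X = 0 \<longleftrightarrow> A \<inter> X = {}"
  unfolding Ncount_def by (auto simp: zero_enat_def)

text \<open>N_A(X) is the counting measure of A \<inter> X; this gives countable additivity in A.\<close>
lemma Ncount_eq_emeasure: "ennreal_of_enat (Ncount A X) = emeasure (count_space UNIV) (A \<inter> X)"
  by (simp add: Ncount_def)

lemma void_event_sets:
  assumes "cr_set P M \<pi>" "A \<in> sets M"
  shows "{\<omega>\<in>space P. \<pi> \<omega> \<inter> A = {}} \<in> sets P"
proof -
  have "{\<omega>\<in>space P. \<pi> \<omega> \<inter> A = {}} = (\<lambda>\<omega>. Ncount A (\<pi> \<omega>)) -` {0} \<inter> space P"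
    by (auto simp: Ncount_eq_0_iff)
  then show ?thesis using measurable_sets[OF measurable_Ncount[OF assms], of "{0}"] by simp
qed

lemma cr_set_subset_space:
  assumes "cr_set P M \<pi>" "\<omega> \<in> space P"
  shows "\<pi> \<omega> \<subseteq> space M"
  using measurable_space[of \<pi> P "cr_space M" \<omega>] assms
  by (auto simp: cr_set_def space_cr_space countable_subsets_def)

definition neglog :: "real \<Rightarrow> ennreal" where
  "neglog q = (if q = 0 then \<infinity> else ennreal (- ln q))"

lemma neglog_mult:
  assumes "0 \<le> a" "a \<le> 1" "0 \<le> b" "b \<le> 1"
  shows "neglog (a * b) = neglog a + neglog b"
proof (cases "a = 0 \<or> b = 0")
  case True
  then show ?thesis by (auto simp: neglog_def)
next
  case False
  then have "a > 0" "b > 0" using assms by auto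
  moreover have "- ln a \<ge> 0" "- ln b \<ge> 0" using \<open>a > 0\<close> \<open>b > 0\<close> assms by auto
  ultimately have "ennreal (- ln (a * b)) = ennreal (- ln a) + ennreal (- ln b)"
    using ennreal_plus[of "- ln a" "- ln b"] by (simp add: ln_mult)
  then show ?thesis using False \<open>a > 0\<close> \<open>b > 0\<close> by (simp add: neglog_def)
qed

lemma neglog_tendsto:
  assumes q: "q \<longlonglongrightarrow> x" and nonneg: "\<And>i. 0 \<le> q i" "0 \<le> x"
  shows "(\<lambda>i. neglog (q i)) \<longlonglongrightarrow> neglog x"
proof (cases "x = 0")
  case False
  then have "eventually (\<lambda>i. q i > 0) sequentially"
    using q nonneg(2) order_tendstoD(1) by force
  moreover have "(\<lambda>i. ennreal (- ln (q i))) \<longlonglongrightarrow> ennreal (- ln x)"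
    by (intro tendsto_ennrealI tendsto_minus tendsto_ln q) (use False in auto)
  ultimately show ?thesis
    using False by (simp add: neglog_def)
      (rule Lim_transform_eventually, auto elim: eventually_mono)
next
  case True
  have "(\<lambda>i. neglog (q i)) \<longlonglongrightarrow> top"
  proof (rule tendsto_top_iff_ennreal[THEN iffD2], intro allI impI)
    fix y :: real assume "0 \<le> y"
    have "eventually (\<lambda>i. q i < exp (- y)) sequentially"
      using q True order_tendstoD(2) by force
    then show "eventually (\<lambda>i. ennreal y < neglog (q i)) sequentially"
    proof (rule eventually_mono)
      fix i assume small: "q i < exp (- y)"
      show "ennreal y < neglog (q i)"
      proof (cases "q i = 0")
        case False
        then have "q i > 0" using nonneg(1)[of i] by linarith
        then have "ln (q i) < - y" using small
          by (metis ln_exp ln_less_cancel_iff exp_gt_zero)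
        then show ?thesis using False \<open>0 \<le> y\<close> by (simp add: ennreal_lessI neglog_def)
      qed (simp add: neglog_def)
    qed
  qed
  then show ?thesis using True by (simp add: neglog_def)
qed

section \<open>The hitting measure\<close>

definition void_prob :: "'w measure \<Rightarrow> ('w \<Rightarrow> 's set) \<Rightarrow> 's set \<Rightarrow> real" where
  "void_prob P \<pi> A = measure P {\<omega>\<in>space P. \<pi> \<omega> \<inter> A = {}}"

lemma void_prob_bounds: "prob_space P \<Longrightarrow> 0 \<le> void_prob P \<pi> A \<and> void_prob P \<pi> A \<le> 1"
  unfolding void_prob_def by (simp add: prob_space.prob_le_1)

lemma neglog1m_hitting:
  assumes "prob_space P" "cr_set P M \<pi>" "A \<in> sets M"
  shows "neglog1m (hitting P \<pi> A) = neglog (void_prob P \<pi> A)"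
proof -
  have "{\<omega> \<in> space P. \<pi> \<omega> \<inter> A \<noteq> {}} = space P - {\<omega>\<in>space P. \<pi> \<omega> \<inter> A = {}}" by auto
  then have "hitting P \<pi> A = 1 - void_prob P \<pi> A"
    unfolding hitting_def void_prob_def
    using prob_space.prob_compl[OF assms(1) void_event_sets[OF assms(2,3)]] by simp
  then show ?thesis by (simp add: neglog1m_def neglog_def)
qed

lemma void_prob_Un_disjoint:
  assumes "prob_space P" "indep_increments P M \<pi>"
    and "A \<in> sets M" "B \<in> sets M" "A \<inter> B = {}"
  shows "void_prob P \<pi> (A \<union> B) = void_prob P \<pi> A * void_prob P \<pi> B"
proof -
  define F where "F = (\<lambda>i::nat. if i = 0 then A else B)"
  define V where "V = (\<lambda>C. (\<lambda>\<omega>. Ncount C (\<pi> \<omega>)) -` {0} \<inter> space P)"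
  have V_eq: "V C = {\<omega>\<in>space P. \<pi> \<omega> \<inter> C = {}}" for C
    by (auto simp: V_def Ncount_eq_0_iff)
  have "\<forall>i<2. F i \<in> sets M" "disjoint_family_on F {..<2}"
    using assms(3-5) by (auto simp: F_def disjoint_family_on_def)
  then have "prob_space.indep_vars P (\<lambda>_. count_space UNIV) (\<lambda>i \<omega>. Ncount (F i) (\<pi> \<omega>)) {..<2}"
    using assms(2) unfolding indep_increments_def by blast
  then have "measure P (\<Inter>i\<in>{..<2}. V (F i)) = (\<Prod>i\<in>{..<2}. measure P (V (F i)))"
    unfolding V_def by (rule prob_space.indep_varsD[OF assms(1)]) (auto simp: lessThan_empty_iff)
  moreover have "{..<2::nat} = {0, 1}" by auto
  moreover have "V A \<inter> V B = V (A \<union> B)" by (auto simp: V_eq)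
  ultimately show ?thesis by (simp add: F_def void_prob_def V_eq)
qed

text \<open>Additivity plus continuity from below: A \<mapsto> -log(1 - T(A)) is countably additive.\<close>
lemma hitting_countably_additive:
  fixes M :: "'s measure" and P :: "'w measure" and \<pi> :: "'w \<Rightarrow> 's set"
  assumes "prob_space P" "cr_set P M \<pi>" "indep_increments P M \<pi>"
  shows "countably_additive (sets M) (\<lambda>A. neglog1m (hitting P \<pi> A))"
proof -
  let ?f = "\<lambda>A. neglog1m (hitting P \<pi> A)"
  have hit: "?f A = neglog (void_prob P \<pi> A)" if "A \<in> sets M" for A
    using neglog1m_hitting[OF assms(1,2) that] .
  have bounds: "0 \<le> void_prob P \<pi> A" "void_prob P \<pi> A \<le> 1" for A
    using void_prob_bounds[OF assms(1)] by auto
  have pos: "positive (sets M) ?f"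
    using prob_space.prob_space[OF assms(1)] by (simp add: positive_def hit void_prob_def neglog_def)
  have add: "additive (sets M) ?f"
    by (auto simp: additive_def hit void_prob_Un_disjoint[OF assms(1,3)] neglog_mult bounds)
  show ?thesis
    unfolding sets.countably_additive_iff_continuous_from_below[OF pos add]
  proof safe
    fix A :: "nat \<Rightarrow> 's set" assume A: "range A \<subseteq> sets M" "incseq A" "\<Union> (range A) \<in> sets M"
    let ?E = "\<lambda>C. {\<omega>\<in>space P. \<pi> \<omega> \<inter> C = {}}"
    have "range (\<lambda>i. ?E (A i)) \<subseteq> sets P" using A void_event_sets[OF assms(2)] by auto
    moreover have "decseq (\<lambda>i. ?E (A i))" using A(2) by (auto simp: incseq_def decseq_def)
    ultimately have "(\<lambda>i. measure P (?E (A i))) \<longlonglongrightarrow> measure P (\<Inter>i. ?E (A i))"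
      using assms(1) by (simp add: prob_space_def finite_measure.finite_Lim_measure_decseq)
    moreover have "(\<Inter>i. ?E (A i)) = ?E (\<Union> (range A))"
      using prob_space.not_empty[OF assms(1)] by auto
    ultimately have "(\<lambda>i. void_prob P \<pi> (A i)) \<longlonglongrightarrow> void_prob P \<pi> (\<Union> (range A))"
      by (simp add: void_prob_def)
    then have "(\<lambda>i. neglog (void_prob P \<pi> (A i))) \<longlonglongrightarrow> neglog (void_prob P \<pi> (\<Union> (range A)))"
      by (rule neglog_tendsto) (use bounds in auto)
    then show "(\<lambda>i. ?f (A i)) \<longlonglongrightarrow> ?f (\<Union> (range A))"
      using A by (simp add: hit subsetD)
  qed
qed

definition hitting_measure :: "'w measure \<Rightarrow> 's measure \<Rightarrow> ('w \<Rightarrow> 's set) \<Rightarrow> 's measure" where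
  "hitting_measure P M \<pi> = measure_of (space M) (sets M) (\<lambda>A. neglog1m (hitting P \<pi> A))"

lemma sets_hitting_measure[simp]: "sets (hitting_measure P M \<pi>) = sets M"
  by (simp add: hitting_measure_def)

lemma emeasure_hitting_measure:
  assumes "prob_space P" "cr_set P M \<pi>" "indep_increments P M \<pi>" "A \<in> sets M"
  shows "emeasure (hitting_measure P M \<pi>) A = neglog1m (hitting P \<pi> A)"
  unfolding hitting_measure_def
proof (rule emeasure_measure_of_sigma[OF sets.sigma_algebra_axioms _ _ assms(4)])
  show "positive (sets M) (\<lambda>A. neglog1m (hitting P \<pi> A))"
    by (simp add: positive_def hitting_def neglog1m_def)
qed (rule hitting_countably_additive[OF assms(1-3)])

section \<open>A finite dominating measure for constructive cr-sets\<close>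

lemma suminf_swap_ennreal: "(\<Sum>i. \<Sum>k. (f i k :: ennreal)) = (\<Sum>k. \<Sum>i. f i k)"
proof -
  have "(\<Sum>i. \<Sum>k. f i k) = (\<integral>\<^sup>+ i. (\<Sum>k. f i k) \<partial>count_space UNIV)"
    by (simp add: nn_integral_count_space_nat)
  also have "\<dots> = (\<Sum>k. \<integral>\<^sup>+ i. f i k \<partial>count_space UNIV)"
    by (rule nn_integral_suminf) simp
  also have "\<dots> = (\<Sum>k. \<Sum>i. f i k)"
    by (simp add: nn_integral_count_space_nat)
  finally show ?thesis .
qed

text \<open>Weight 2^-k / (1 + n) attached to each of the n points of the k-th finite piece.\<close>
definition piece_weight :: "nat \<Rightarrow> enat \<Rightarrow> ennreal" where
  "piece_weight k n = ennreal ((1/2)^k / (1 + real (the_enat n)))"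

definition weighted_count :: "'s measure \<Rightarrow> (nat \<Rightarrow> 'w \<Rightarrow> 's set) \<Rightarrow> 's set \<Rightarrow> 'w \<Rightarrow> ennreal" where
  "weighted_count M \<pi>s A \<omega> =
     (\<Sum>k. piece_weight k (Ncount (space M) (\<pi>s k \<omega>)) * ennreal_of_enat (Ncount A (\<pi>s k \<omega>)))"

lemma weighted_count_measurable:
  assumes "\<And>k. cr_set P M (\<pi>s k)" "A \<in> sets M"
  shows "weighted_count M \<pi>s A \<in> borel_measurable P"
proof -
  have "(\<lambda>\<omega>. piece_weight k (Ncount (space M) (\<pi>s k \<omega>))) \<in> borel_measurable P" for k
    by (rule measurable_compose[OF measurable_Ncount[OF assms(1) sets.top]]) simp
  moreover have "(\<lambda>\<omega>. ennreal_of_enat (Ncount A (\<pi>s k \<omega>))) \<in> borel_measurable P" for k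
    by (rule measurable_compose[OF measurable_Ncount[OF assms]]) simp
  ultimately show ?thesis unfolding weighted_count_def by measurable
qed

lemma weighted_count_countably_additive:
  assumes "disjoint_family F"
  shows "(\<Sum>i. weighted_count M \<pi>s (F i) \<omega>) = weighted_count M \<pi>s (\<Union>i. F i) \<omega>"
proof -
  have count_add: "(\<Sum>i. ennreal_of_enat (Ncount (F i) X)) = ennreal_of_enat (Ncount (\<Union>i. F i) X)" for X
  proof -
    have "(\<Sum>i. ennreal_of_enat (Ncount (F i) X)) = emeasure (count_space UNIV) (\<Union>i. F i \<inter> X)"
      unfolding Ncount_eq_emeasure
      by (rule suminf_emeasure) (use assms in \<open>auto simp: disjoint_family_on_def\<close>)
    also have "(\<Union>i. F i \<inter> X) = (\<Union>i. F i) \<inter> X" by auto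
    finally show ?thesis by (simp add: Ncount_eq_emeasure)
  qed
  show ?thesis unfolding weighted_count_def
    by (subst suminf_swap_ennreal) (simp add: count_add)
qed

text \<open>Each piece contributes at most 2^-k, so the weighted count is bounded by 2.\<close>
lemma weighted_count_le_2:
  assumes "\<And>k. finite (\<pi>s k \<omega>)" "\<And>k. \<pi>s k \<omega> \<subseteq> space M"
  shows "weighted_count M \<pi>s A \<omega> \<le> 2"
proof -
  have piece_le: "piece_weight k (Ncount (space M) (\<pi>s k \<omega>)) * ennreal_of_enat (Ncount A (\<pi>s k \<omega>))
      \<le> ennreal ((1/2)^k)" for k
  proof -
    let ?a = "real (card (A \<inter> \<pi>s k \<omega>))" and ?s = "real (card (space M \<inter> \<pi>s k \<omega>))"
    have fin: "finite (A \<inter> \<pi>s k \<omega>)" "finite (space M \<inter> \<pi>s k \<omega>)" using assms(1)[of k] by auto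
    have "?a \<le> ?s" using assms(2)[of k] fin by (intro of_nat_mono card_mono) auto
    then have "?a / (1 + ?s) \<le> 1" by (simp add: divide_le_eq_1)
    then have "(1/2)^k / (1 + ?s) * ?a \<le> (1/2)^k"
      using mult_left_mono[of "?a / (1 + ?s)" 1 "(1/2)^k"] by simp
    moreover have "piece_weight k (Ncount (space M) (\<pi>s k \<omega>)) * ennreal_of_enat (Ncount A (\<pi>s k \<omega>))
        = ennreal ((1/2)^k / (1 + ?s) * ?a)"
      using fin by (simp add: piece_weight_def Ncount_def ennreal_mult''[symmetric]
          ennreal_of_nat_eq_real_of_nat del: times_divide_eq_left)
    ultimately show ?thesis by (simp add: ennreal_leI)
  qed
  have "weighted_count M \<pi>s A \<omega> \<le> (\<Sum>k. ennreal ((1/2)^k))"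
    unfolding weighted_count_def by (intro suminf_le piece_le) auto
  also have "\<dots> = ennreal (\<Sum>k. (1/2)^k)"
    by (intro suminf_ennreal2) (auto simp: summable_geometric)
  also have "(\<Sum>k. (1/2::real)^k) = 2" using suminf_geometric[of "1/2::real"] by simp
  finally show ?thesis by simp
qed

text \<open>All weights are positive, so a vanishing weighted count means no piece meets A.\<close>
lemma weighted_count_eq_0:
  assumes "weighted_count M \<pi>s A \<omega> = 0"
  shows "A \<inter> \<pi>s k \<omega> = {}"
proof -
  have "piece_weight k (Ncount (space M) (\<pi>s k \<omega>)) * ennreal_of_enat (Ncount A (\<pi>s k \<omega>)) = 0"
    using assms unfolding weighted_count_def by (metis (mono_tags) suminf_eq_zero_iff summableI zero_le)
  moreover have "piece_weight k n \<noteq> 0" for n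
    by (simp add: piece_weight_def)
  ultimately have "Ncount A (\<pi>s k \<omega>) = 0"
    by (metis ennreal_of_enat_0 ennreal_of_enat_inj mult_eq_0_iff)
  then show ?thesis by (simp add: Ncount_eq_0_iff)
qed

definition dominating_measure :: "'s measure \<Rightarrow> 'w measure \<Rightarrow> (nat \<Rightarrow> 'w \<Rightarrow> 's set) \<Rightarrow> 's measure" where
  "dominating_measure M P \<pi>s = measure_of (space M) (sets M) (\<lambda>A. \<integral>\<^sup>+\<omega>. weighted_count M \<pi>s A \<omega> \<partial>P)"

lemma sets_dominating_measure[simp]: "sets (dominating_measure M P \<pi>s) = sets M"
  and space_dominating_measure[simp]: "space (dominating_measure M P \<pi>s) = space M"
  by (simp_all add: dominating_measure_def)

lemma emeasure_dominating_measure: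
  fixes M :: "'s measure" and P :: "'w measure" and \<pi>s :: "nat \<Rightarrow> 'w \<Rightarrow> 's set"
  assumes "\<And>k. cr_set P M (\<pi>s k)" "A \<in> sets M"
  shows "emeasure (dominating_measure M P \<pi>s) A = (\<integral>\<^sup>+\<omega>. weighted_count M \<pi>s A \<omega> \<partial>P)"
  unfolding dominating_measure_def
proof (rule emeasure_measure_of_sigma[OF sets.sigma_algebra_axioms _ _ assms(2)])
  have "weighted_count M \<pi>s {} = (\<lambda>_. 0)"
    by (simp add: weighted_count_def Ncount_def fun_eq_iff)
  then show "positive (sets M) (\<lambda>A. \<integral>\<^sup>+\<omega>. weighted_count M \<pi>s A \<omega> \<partial>P)"
    by (simp add: positive_def)
  show "countably_additive (sets M) (\<lambda>A. \<integral>\<^sup>+\<omega>. weighted_count M \<pi>s A \<omega> \<partial>P)"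
    unfolding countably_additive_def
  proof safe
    fix F :: "nat \<Rightarrow> 's set" assume F: "range F \<subseteq> sets M" "disjoint_family F"
    have "(\<Sum>i. \<integral>\<^sup>+\<omega>. weighted_count M \<pi>s (F i) \<omega> \<partial>P) = (\<integral>\<^sup>+\<omega>. (\<Sum>i. weighted_count M \<pi>s (F i) \<omega>) \<partial>P)"
      by (rule nn_integral_suminf[symmetric]) (use F in \<open>auto intro: weighted_count_measurable[OF assms(1)]\<close>)
    then show "(\<Sum>i. \<integral>\<^sup>+\<omega>. weighted_count M \<pi>s (F i) \<omega> \<partial>P) = (\<integral>\<^sup>+\<omega>. weighted_count M \<pi>s (\<Union> (range F)) \<omega> \<partial>P)"
      by (simp add: weighted_count_countably_additive[OF F(2)])
  qed
qed

lemma finite_dominating_measure: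
  assumes "prob_space P" "\<And>k. finite_cr_set P M (\<pi>s k)"
  shows "finite_measure (dominating_measure M P \<pi>s)"
proof (rule finite_measureI)
  have cr: "cr_set P M (\<pi>s k)" for k using assms(2) by (simp add: finite_cr_set_def)
  have "emeasure (dominating_measure M P \<pi>s) (space M) = (\<integral>\<^sup>+\<omega>. weighted_count M \<pi>s (space M) \<omega> \<partial>P)"
    by (rule emeasure_dominating_measure[OF cr sets.top])
  also have "\<dots> \<le> (\<integral>\<^sup>+\<omega>. 2 \<partial>P)"
    using assms(2) cr_set_subset_space[OF cr]
    by (intro nn_integral_mono weighted_count_le_2) (auto simp: finite_cr_set_def)
  also have "\<dots> = 2" by (simp add: prob_space.emeasure_space_1[OF assms(1)])
  finally show "emeasure (dominating_measure M P \<pi>s) (space (dominating_measure M P \<pi>s)) \<noteq> \<infinity>"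
    by (auto simp: top_unique)
qed

text \<open>If \<pi> = \<Union>k \<pi>_k, then \<lambda>(A) = 0 forces \<pi> to miss A almost surely, so \<nu>(A) = 0.\<close>
lemma hitting_measure_absolutely_continuous:
  assumes "prob_space P" "cr_set P M \<pi>" "indep_increments P M \<pi>"
    and "\<And>k. cr_set P M (\<pi>s k)" "\<And>\<omega>. \<omega> \<in> space P \<Longrightarrow> \<pi> \<omega> = (\<Union>k. \<pi>s k \<omega>)"
  shows "absolutely_continuous (dominating_measure M P \<pi>s) (hitting_measure P M \<pi>)"
  unfolding absolutely_continuous_def
proof
  fix A assume null: "A \<in> null_sets (dominating_measure M P \<pi>s)"
  then have A: "A \<in> sets M" by (simp add: null_sets_def)
  then have "(\<integral>\<^sup>+\<omega>. weighted_count M \<pi>s A \<omega> \<partial>P) = 0"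
    using null emeasure_dominating_measure[OF assms(4) A] by (simp add: null_sets_def)
  then have "AE \<omega> in P. weighted_count M \<pi>s A \<omega> = 0"
    using nn_integral_0_iff_AE[OF weighted_count_measurable[OF assms(4) A]] by simp
  then have "AE \<omega> in P. \<pi> \<omega> \<inter> A = {}"
    using AE_space
  proof eventually_elim
    case (elim \<omega>)
    then show ?case using weighted_count_eq_0[of M \<pi>s A \<omega>] assms(5)[of \<omega>] by blast
  qed
  moreover have "{\<omega>\<in>space P. \<pi> \<omega> \<inter> A \<noteq> {}} = space P - {\<omega>\<in>space P. \<pi> \<omega> \<inter> A = {}}" by auto
  then have "{\<omega>\<in>space P. \<pi> \<omega> \<inter> A \<noteq> {}} \<in> sets P"
    using void_event_sets[OF assms(2) A] by auto
  ultimately have "emeasure P {\<omega>\<in>space P. \<pi> \<omega> \<inter> A \<noteq> {}} = 0"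
    using AE_iff_measurable[of _ P "\<lambda>\<omega>. \<pi> \<omega> \<inter> A = {}"] by auto
  then have "hitting P \<pi> A = 0" by (simp add: hitting_def measure_def)
  then show "A \<in> null_sets (hitting_measure P M \<pi>)"
    using A by (simp add: null_sets_def emeasure_hitting_measure[OF assms(1-3) A] neglog1m_def)
qed

section \<open>Measures dominated by a finite measure are countable sums of finite measures\<close>

lemma sum_less_truncations_ennreal: "(\<Sum>n<N. min 1 (x - of_nat n)) = min x (of_nat N :: ennreal)"
proof (induction N)
  case (Suc N)
  have "min x (of_nat N) + min 1 (x - of_nat N) = min x (of_nat (Suc N))"
  proof (cases "x \<le> of_nat N")
    case True
    then have "x < top" using of_nat_less_top[of N] by (rule le_less_trans)
    then have "x - of_nat N = 0" using True by (simp add: diff_eq_0_iff_ennreal)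
    moreover have "x \<le> of_nat (Suc N)" using True order_trans by fastforce
    ultimately show ?thesis using True by simp
  next
    case False
    then have "of_nat N \<le> x" by simp
    then obtain d where x: "x = of_nat N + d"
      by (metis add_diff_inverse_ennreal)
    have "min (of_nat N + d) (of_nat N + 1) = of_nat N + min d 1"
      by (cases "d \<le> 1") (simp_all add: add_left_mono min_def)
    then show ?thesis using False x by (auto simp: min_def add.commute)
  qed
  then show ?case using Suc by simp
qed simp

text \<open>Splitting x \<in> [0, \<infinity>] into countably many slices with values in [0, 1].\<close>
lemma suminf_truncations_ennreal: "(\<Sum>n. min 1 (x - of_nat n)) = (x :: ennreal)"
proof -
  have "(\<Sum>n. min 1 (x - of_nat n)) = (SUP N. inf x (of_nat N))"
    by (simp add: suminf_eq_SUP sum_less_truncations_ennreal inf_min)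
  also have "\<dots> = inf x (SUP N. of_nat N)" by (simp add: inf_SUP)
  finally show ?thesis by (simp add: ennreal_SUP_of_nat_eq_top)
qed

text \<open>Radon-Nikodym and slicing of the density: a measure dominated by a finite measure
  is a countable sum of finite measures.\<close>
lemma absolutely_continuous_sum_finite_measures:
  assumes "finite_measure L" "absolutely_continuous L N" "sets N = sets L"
  shows "\<exists>\<mu> :: nat \<Rightarrow> 'a measure. (\<forall>n. finite_measure (\<mu> n) \<and> sets (\<mu> n) = sets L) \<and>
           (\<forall>A\<in>sets L. emeasure N A = (\<Sum>n. emeasure (\<mu> n) A))"
proof -
  interpret finite_measure L by fact
  obtain f where f[measurable]: "f \<in> borel_measurable L" and density: "density L f = N"
    using Radon_Nikodym[OF assms(2,3)] by auto
  define \<mu> where "\<mu> n = density L (\<lambda>x. min 1 (f x - of_nat n))" for n :: nat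
  have "finite_measure (\<mu> n)" for n
  proof (rule finite_measureI)
    have "emeasure (\<mu> n) (space (\<mu> n)) = (\<integral>\<^sup>+x. min 1 (f x - of_nat n) * indicator (space L) x \<partial>L)"
      by (simp add: \<mu>_def emeasure_density)
    also have "\<dots> \<le> (\<integral>\<^sup>+x. indicator (space L) x \<partial>L)"
      by (intro nn_integral_mono) (auto simp: indicator_def)
    also have "\<dots> < \<infinity>" using emeasure_finite[of "space L"] by (simp add: less_top[symmetric])
    finally show "emeasure (\<mu> n) (space (\<mu> n)) \<noteq> \<infinity>" by simp
  qed
  moreover have "emeasure N A = (\<Sum>n. emeasure (\<mu> n) A)" if A[measurable]: "A \<in> sets L" for A
  proof -
    have "emeasure N A = (\<integral>\<^sup>+x. f x * indicator A x \<partial>L)"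
      by (simp add: density[symmetric] emeasure_density)
    also have "\<dots> = (\<integral>\<^sup>+x. (\<Sum>n. min 1 (f x - of_nat n) * indicator A x) \<partial>L)"
      by (simp add: suminf_truncations_ennreal)
    also have "\<dots> = (\<Sum>n. \<integral>\<^sup>+x. min 1 (f x - of_nat n) * indicator A x \<partial>L)"
      by (rule nn_integral_suminf) measurable
    finally show ?thesis by (simp add: \<mu>_def emeasure_density)
  qed
  ultimately show ?thesis by (intro exI[of _ \<mu>]) (auto simp: \<mu>_def)
qed

theorem proposition6p9:
  fixes M :: "'s measure" and P :: "'w measure" and \<pi> :: "'w \<Rightarrow> 's set"
  assumes "prob_space P"
    and "{(x, x) | x. x \<in> space M} \<in> sets (M \<Otimes>\<^sub>M M)"
    and "cr_set P M \<pi>"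
    and "constructive P M \<pi>"
    and "indep_increments P M \<pi>"
  shows "\<exists>\<mu> :: nat \<Rightarrow> 's measure.
           (\<forall>n. finite_measure (\<mu> n) \<and> sets (\<mu> n) = sets M) \<and>
           (\<forall>A\<in>sets M. neglog1m (hitting P \<pi> A) = (\<Sum>n. emeasure (\<mu> n) A))"
proof -
  obtain \<pi>s :: "nat \<Rightarrow> 'w \<Rightarrow> 's set" where pieces: "\<And>k. finite_cr_set P M (\<pi>s k)"
    and union: "\<And>\<omega>. \<omega> \<in> space P \<Longrightarrow> \<pi> \<omega> = (\<Union>k. \<pi>s k \<omega>)"
    using assms(4) unfolding constructive_def by blast
  let ?L = "dominating_measure M P \<pi>s" and ?N = "hitting_measure P M \<pi>"
  have "finite_measure ?L"
    by (rule finite_dominating_measure[OF assms(1) pieces])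
  moreover have "absolutely_continuous ?L ?N"
    using pieces union
    by (intro hitting_measure_absolutely_continuous[OF assms(1,3,5)]) (auto simp: finite_cr_set_def)
  ultimately obtain \<mu> :: "nat \<Rightarrow> 's measure"
    where "\<forall>n. finite_measure (\<mu> n) \<and> sets (\<mu> n) = sets M"
      and "\<forall>A\<in>sets M. emeasure ?N A = (\<Sum>n. emeasure (\<mu> n) A)"
    using absolutely_continuous_sum_finite_measures[of ?L ?N] by auto
  then show ?thesis
    using emeasure_hitting_measure[OF assms(1,3,5)] by auto
qed

end
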